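(* Let $\mathbf 1=(1,1,1,1)^t\in\mathbb C^4$, $A=\mathbf 1\mathbf 1^*-I$ (the $4\times4$ matrix with $0$ on the diagonal and $1$ off the diagonal), and $t\in\mathbb R$. Then \[\|A+tI\|_m=\begin{cases}|t|&\text{if } t\ge1\text{ or } t\le-3,\\ \tfrac12|3-t|&\text{if } -3\le t\le1.\end{cases}\] In particular $\|A\|_m=\tfrac32$, $\|I\|_m=1$, and $\|A-I\|_m=2>(\|A\|_m^2+\|I\|_m^2)^{1/2}$.
   Context: For a $4\times4$ matrix $B=[b_{ij}]$, $\|B\|_m$ is the norm of the Schur multiplier $R=[r_{ij}]\mapsto[b_{ij}r_{ij}]$ on $4\times4$ complex matrices with the operator norm. *)

theory Defs
  imports "HOL-Analysis.Analysis"
begin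

type_synonym cmat4 = "complex ^ 4 ^ 4"

definition op_norm :: "cmat4 \<Rightarrow> real" where
  "op_norm R = onorm (\<lambda>x. R *v x)"

definition schur_prod :: "cmat4 \<Rightarrow> cmat4 \<Rightarrow> cmat4" where
  "schur_prod B R = (\<chi> i j. B $ i $ j * R $ i $ j)"

definition schur_mult_norm :: "cmat4 \<Rightarrow> real" where
  "schur_mult_norm B = (SUP R\<in>{R. op_norm R \<le> 1}. op_norm (schur_prod B R))"

definition Amat :: cmat4 where
  "Amat = (\<chi> i j. if i = j then 0 else 1)"

end

theory Submission
  imports Defs
begin

(* Write B(d,e) for the matrix with d on the diagonal and e elsewhere, so that A + tI = B(t,1).
   With J = 1 1^* and the three nontrivial characters h of Z/2 x Z/2 (as +-1 vectors),
   B(d,e) = (d+3e)/4 J + (d-e)/4 S, where S is the sum of the three matrices h h^*.  Schur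
   multiplication by h h^* is conjugation by the diagonal unitary diag(h), hence
   ||B(d,e)||_m <= |d+3e|/4 + 3|d-e|/4.  Testing against R = I and against the reflection
   R = I - J/2 = B(1/2,-1/2), whose Schur products with B(d,e) are again of the form B(d',e')
   and have the eigenvector (1,1,1,1), gives the lower bounds |d| and |d-3e|/2, and the upper
   bound never exceeds the larger of the two. *)

lemma norm_mult_vec_le_op_norm: "norm (M *v x) \<le> op_norm M * norm x"
  unfolding op_norm_def by (rule onorm) simp

lemma op_norm_le:
  assumes "\<And>x. norm (M *v x) \<le> c * norm x"
  shows "op_norm M \<le> c"
  unfolding op_norm_def using assms by (rule onorm_le)

lemma op_norm_nonneg: "0 \<le> op_norm M"
  unfolding op_norm_def by (rule onorm_pos_le) simp

lemma op_norm_add_le: "op_norm (A + B) \<le> op_norm A + op_norm B"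
  unfolding op_norm_def matrix_vector_mult_add_rdistrib
  by (rule onorm_triangle) simp_all

lemma matrix_scaleR_vector_mult: "(c *\<^sub>R M) *v x = c *\<^sub>R (M *v x)" for M :: cmat4
  by (simp add: vec_eq_iff matrix_vector_mult_def scaleR_sum_right)

lemma op_norm_scaleR: "op_norm (c *\<^sub>R M) = \<bar>c\<bar> * op_norm M"
  unfolding op_norm_def matrix_scaleR_vector_mult
  by (rule onorm_scaleR) simp

lemma op_norm_mult_le: "op_norm (A ** B) \<le> op_norm A * op_norm B"
proof -
  have "op_norm (A ** B) = onorm ((*v) A \<circ> (*v) B)"
    unfolding op_norm_def by (simp add: comp_def matrix_vector_mul_assoc)
  also have "\<dots> \<le> op_norm A * op_norm B"
    unfolding op_norm_def by (rule onorm_compose) simp_all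
  finally show ?thesis .
qed

lemma op_norm_le_1_of_isometry:
  assumes "\<And>x. norm (U *v x) = norm x"
  shows "op_norm U \<le> 1"
  using assms by (intro op_norm_le) simp

lemma cmod_eigenvalue_le_op_norm:
  assumes "M *v x = c *s x" "x \<noteq> 0"
  shows "cmod c \<le> op_norm M"
proof -
  have "cmod c * norm x \<le> op_norm M * norm x"
    using norm_mult_vec_le_op_norm[of M x] assms(1)
    by (simp add: norm_vec_def L2_set_def norm_mult power_mult_distrib
        sum_distrib_left[symmetric] real_sqrt_mult)
  then show ?thesis using assms(2) by simp
qed

lemma cmod_entry_le_op_norm: "cmod (M $ i $ j) \<le> op_norm M"
proof -
  have "cmod (M $ i $ j) = cmod ((M *v axis j 1) $ i)"
    by (simp add: matrix_vector_mult_def axis_def if_distrib cong: if_cong)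
  also have "\<dots> \<le> norm (M *v axis j 1)"
    by (rule Finite_Cartesian_Product.norm_nth_le)
  also have "\<dots> \<le> op_norm M"
    using norm_mult_vec_le_op_norm[of M "axis j 1"] by (simp add: norm_Basis)
  finally show ?thesis .
qed

lemma op_norm_le_sum_entries: "op_norm M \<le> (\<Sum>i\<in>UNIV. \<Sum>j\<in>UNIV. cmod (M $ i $ j))"
proof (rule op_norm_le)
  fix x :: "complex^4"
  have "norm (M *v x) \<le> (\<Sum>i\<in>UNIV. norm ((M *v x) $ i))"
    by (simp add: norm_vec_def L2_set_le_sum)
  also have "\<dots> \<le> (\<Sum>i\<in>UNIV. \<Sum>j\<in>UNIV. cmod (M $ i $ j) * norm x)"
  proof (rule sum_mono)
    fix i
    have "norm ((M *v x) $ i) \<le> (\<Sum>j\<in>UNIV. cmod (M $ i $ j * x $ j))"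
      unfolding matrix_vector_mult_def by (simp add: sum_norm_le)
    also have "\<dots> \<le> (\<Sum>j\<in>UNIV. cmod (M $ i $ j) * norm x)"
      by (intro sum_mono) (simp add: norm_mult Finite_Cartesian_Product.norm_nth_le mult_left_mono)
    finally show "norm ((M *v x) $ i) \<le> (\<Sum>j\<in>UNIV. cmod (M $ i $ j) * norm x)" .
  qed
  finally show "norm (M *v x) \<le> (\<Sum>i\<in>UNIV. \<Sum>j\<in>UNIV. cmod (M $ i $ j)) * norm x"
    by (simp add: sum_distrib_right)
qed

definition diag_mat :: "(4 \<Rightarrow> complex) \<Rightarrow> cmat4" where
  "diag_mat s = (\<chi> i j. if i = j then s i else 0)"

definition outer_prod :: "(4 \<Rightarrow> complex) \<Rightarrow> (4 \<Rightarrow> complex) \<Rightarrow> cmat4" where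
  "outer_prod s t = (\<chi> i j. s i * cnj (t j))"

lemma norm_diag_mat_mult_vec:
  assumes "\<And>j. cmod (s j) = 1"
  shows "norm (diag_mat s *v x) = norm x"
proof -
  have "diag_mat s *v x = (\<chi> i. s i * x $ i)"
    by (simp add: vec_eq_iff diag_mat_def matrix_vector_mult_def if_distrib[of "\<lambda>z. z * _"]
        cong: if_cong)
  then show ?thesis
    by (simp add: norm_vec_def L2_set_def norm_mult assms)
qed

lemma op_norm_diag_mat_le:
  assumes "\<And>j. cmod (s j) = 1"
  shows "op_norm (diag_mat s) \<le> 1"
  by (rule op_norm_le_1_of_isometry) (rule norm_diag_mat_mult_vec[OF assms])

lemma schur_prod_outer_prod:
  "schur_prod (outer_prod s t) R = diag_mat s ** R ** diag_mat (\<lambda>j. cnj (t j))"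
  by (simp add: vec_eq_iff schur_prod_def outer_prod_def diag_mat_def matrix_matrix_mult_def
      if_distrib[of "\<lambda>z. z * _"] if_distrib[of "\<lambda>z. _ * z"] cong: if_cong)

lemma op_norm_schur_prod_outer_prod_le:
  assumes "\<And>j. cmod (s j) = 1" "\<And>j. cmod (t j) = 1"
  shows "op_norm (schur_prod (outer_prod s t) R) \<le> op_norm R"
proof -
  have "op_norm (schur_prod (outer_prod s t) R)
      \<le> op_norm (diag_mat s) * op_norm R * op_norm (diag_mat (\<lambda>j. cnj (t j)))"
    unfolding schur_prod_outer_prod
    by (rule order_trans[OF op_norm_mult_le mult_right_mono[OF op_norm_mult_le op_norm_nonneg]])
  also have "\<dots> \<le> 1 * op_norm R * 1"
    using assms by (intro mult_mono op_norm_diag_mat_le) (simp_all add: op_norm_nonneg)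
  finally show ?thesis by simp
qed

lemma schur_prod_add_left: "schur_prod (A + B) R = schur_prod A R + schur_prod B R"
  by (simp add: vec_eq_iff schur_prod_def distrib_right)

lemma schur_prod_scaleR_left: "schur_prod (c *\<^sub>R B) R = c *\<^sub>R schur_prod B R"
  by (simp add: vec_eq_iff schur_prod_def scaleR_conv_of_real)

lemma op_norm_schur_prod_le:
  "op_norm (schur_prod B R) \<le> (\<Sum>i\<in>UNIV. \<Sum>j\<in>UNIV. cmod (B $ i $ j)) * op_norm R"
proof -
  have "op_norm (schur_prod B R) \<le> (\<Sum>i\<in>UNIV. \<Sum>j\<in>UNIV. cmod (B $ i $ j) * cmod (R $ i $ j))"
    using op_norm_le_sum_entries[of "schur_prod B R"] by (simp add: schur_prod_def norm_mult)
  also have "\<dots> \<le> (\<Sum>i\<in>UNIV. \<Sum>j\<in>UNIV. cmod (B $ i $ j) * op_norm R)"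
    by (intro sum_mono mult_left_mono cmod_entry_le_op_norm) simp
  finally show ?thesis by (simp add: sum_distrib_right)
qed

lemma bdd_above_schur_prod_op_norms:
  "bdd_above ((\<lambda>R. op_norm (schur_prod B R)) ` {R. op_norm R \<le> 1})"
proof (rule bdd_aboveI2)
  fix R assume "R \<in> {R. op_norm R \<le> 1}"
  then have "(\<Sum>i\<in>UNIV. \<Sum>j\<in>UNIV. cmod (B $ i $ j)) * op_norm R
      \<le> (\<Sum>i\<in>UNIV. \<Sum>j\<in>UNIV. cmod (B $ i $ j))"
    by (intro mult_left_le sum_nonneg) simp_all
  with op_norm_schur_prod_le
  show "op_norm (schur_prod B R) \<le> (\<Sum>i\<in>UNIV. \<Sum>j\<in>UNIV. cmod (B $ i $ j))"
    by (rule order_trans)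
qed

lemma op_norm_schur_prod_le_schur_mult_norm:
  "op_norm R \<le> 1 \<Longrightarrow> op_norm (schur_prod B R) \<le> schur_mult_norm B"
  unfolding schur_mult_norm_def by (rule cSUP_upper) (simp_all add: bdd_above_schur_prod_op_norms)

lemma op_norm_mat_1: "op_norm (mat 1) = 1"
  unfolding op_norm_def matrix_vector_mul_lid by (rule onorm_id)

lemma schur_mult_norm_le:
  assumes "\<And>R. op_norm R \<le> 1 \<Longrightarrow> op_norm (schur_prod B R) \<le> c"
  shows "schur_mult_norm B \<le> c"
  unfolding schur_mult_norm_def
proof (rule cSUP_least)
  show "{R. op_norm R \<le> 1} \<noteq> {}"
    using op_norm_mat_1 by (metis empty_iff mem_Collect_eq order_refl)
qed (use assms in simp)

definition diag_offdiag_mat :: "real \<Rightarrow> real \<Rightarrow> cmat4" where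
  "diag_offdiag_mat d e = (\<chi> i j. if i = j then of_real d else of_real e)"

definition sign_a :: "4 \<Rightarrow> complex" where
  "sign_a j = (if j = 1 \<or> j = 3 then -1 else 1)"

definition sign_b :: "4 \<Rightarrow> complex" where
  "sign_b j = (if j = 1 \<or> j = 2 then -1 else 1)"

definition sign_ab :: "4 \<Rightarrow> complex" where
  "sign_ab j = sign_a j * sign_b j"

lemma diag_offdiag_mat_decomp:
  "diag_offdiag_mat d e = ((d + 3 * e) / 4) *\<^sub>R outer_prod (\<lambda>_. 1) (\<lambda>_. 1)
     + ((d - e) / 4) *\<^sub>R (outer_prod sign_a sign_a + outer_prod sign_b sign_b + outer_prod sign_ab sign_ab)"
  unfolding vec_eq_iff forall_4
  by (simp add: diag_offdiag_mat_def outer_prod_def sign_a_def sign_b_def sign_ab_def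
      vector_scaleR_component) (simp add: scaleR_conv_of_real field_simps)

lemma schur_mult_norm_diag_offdiag_le:
  "schur_mult_norm (diag_offdiag_mat d e) \<le> \<bar>d + 3 * e\<bar> / 4 + 3 * \<bar>d - e\<bar> / 4"
proof (rule schur_mult_norm_le)
  fix R assume R: "op_norm R \<le> 1"
  have unimodular: "cmod (s j) = 1" if "s \<in> {\<lambda>_. 1, sign_a, sign_b, sign_ab}" for s j
    using that by (auto simp: sign_a_def sign_b_def sign_ab_def norm_mult)
  have sign_conj: "op_norm (schur_prod (outer_prod s s) R) \<le> 1"
    if "s \<in> {\<lambda>_. 1, sign_a, sign_b, sign_ab}" for s
    using op_norm_schur_prod_outer_prod_le[of s s R] unimodular[OF that] R by fastforce
  have "op_norm (schur_prod (diag_offdiag_mat d e) R)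
      \<le> \<bar>(d + 3 * e) / 4\<bar> * op_norm (schur_prod (outer_prod (\<lambda>_. 1) (\<lambda>_. 1)) R)
        + \<bar>(d - e) / 4\<bar> * (op_norm (schur_prod (outer_prod sign_a sign_a) R)
          + op_norm (schur_prod (outer_prod sign_b sign_b) R)
          + op_norm (schur_prod (outer_prod sign_ab sign_ab) R))"
    unfolding diag_offdiag_mat_decomp schur_prod_add_left schur_prod_scaleR_left
    by (smt (verit) op_norm_add_le op_norm_scaleR mult_left_mono abs_ge_zero)
  also have "\<dots> \<le> \<bar>(d + 3 * e) / 4\<bar> * 1 + \<bar>(d - e) / 4\<bar> * (1 + 1 + 1)"
    by (intro add_mono mult_left_mono sign_conj) simp_all
  finally show "op_norm (schur_prod (diag_offdiag_mat d e) R)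
      \<le> \<bar>d + 3 * e\<bar> / 4 + 3 * \<bar>d - e\<bar> / 4"
    by simp
qed

lemma schur_prod_diag_offdiag_mat:
  "schur_prod (diag_offdiag_mat d e) (diag_offdiag_mat d' e') = diag_offdiag_mat (d * d') (e * e')"
  by (simp add: vec_eq_iff schur_prod_def diag_offdiag_mat_def)

lemma op_norm_diag_offdiag_mat_ge: "\<bar>d + 3 * e\<bar> \<le> op_norm (diag_offdiag_mat d e)"
proof -
  have "diag_offdiag_mat d e *v 1 = of_real (d + 3 * e) *s 1"
    unfolding vec_eq_iff forall_4
    by (simp add: diag_offdiag_mat_def matrix_vector_mult_def sum_4)
  then have "cmod (of_real (d + 3 * e)) \<le> op_norm (diag_offdiag_mat d e)"
    by (rule cmod_eigenvalue_le_op_norm) (simp add: vec_eq_iff)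
  then show ?thesis by (simp only: norm_of_real)
qed

lemma mat_1_eq_diag_offdiag_mat: "mat 1 = diag_offdiag_mat 1 0"
  by (simp add: vec_eq_iff diag_offdiag_mat_def mat_def)

lemma norm_reflection_mult_vec: "norm (diag_offdiag_mat (1/2) (-1/2) *v x) = norm x"
proof -
  have "(norm (diag_offdiag_mat (1/2) (-1/2) *v x))\<^sup>2 = (norm x)\<^sup>2"
    unfolding norm_vec_def L2_set_def
    by (simp add: sum_4 cmod_power2 diag_offdiag_mat_def matrix_vector_mult_def)
      (simp add: power2_eq_square algebra_simps)
  then show ?thesis by (simp add: power2_eq_iff_nonneg)
qed

lemma schur_mult_norm_diag_offdiag_ge:
  "max \<bar>d\<bar> (\<bar>d - 3 * e\<bar> / 2) \<le> schur_mult_norm (diag_offdiag_mat d e)"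
proof -
  have lower: "\<bar>d * d' + 3 * (e * e')\<bar> \<le> schur_mult_norm (diag_offdiag_mat d e)"
    if "op_norm (diag_offdiag_mat d' e') \<le> 1" for d' e'
    using op_norm_diag_offdiag_mat_ge[of "d * d'" "e * e'"]
      op_norm_schur_prod_le_schur_mult_norm[OF that, of "diag_offdiag_mat d e"]
    unfolding schur_prod_diag_offdiag_mat by linarith
  have "\<bar>d\<bar> \<le> schur_mult_norm (diag_offdiag_mat d e)"
    using lower[of 1 0] op_norm_mat_1 by (simp flip: mat_1_eq_diag_offdiag_mat)
  moreover have "\<bar>d - 3 * e\<bar> / 2 \<le> schur_mult_norm (diag_offdiag_mat d e)"
    using lower[of "1/2" "-1/2"] op_norm_le_1_of_isometry[OF norm_reflection_mult_vec]
    by (simp add: abs_if split: if_splits)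
  ultimately show ?thesis by simp
qed

theorem schur_mult_norm_diag_offdiag_mat:
  "schur_mult_norm (diag_offdiag_mat d e) = max \<bar>d\<bar> (\<bar>d - 3 * e\<bar> / 2)"
proof -
  have "\<bar>d + 3 * e\<bar> / 4 + 3 * \<bar>d - e\<bar> / 4 \<le> max \<bar>d\<bar> (\<bar>d - 3 * e\<bar> / 2)"
    unfolding max_def abs_if by (auto simp: field_simps)
  then show ?thesis
    using schur_mult_norm_diag_offdiag_le[of d e] schur_mult_norm_diag_offdiag_ge[of d e]
    by linarith
qed

lemma Amat_plus_scaleR_mat_1: "Amat + t *\<^sub>R mat 1 = diag_offdiag_mat t 1"
  by (simp add: vec_eq_iff Amat_def diag_offdiag_mat_def mat_def vector_scaleR_component)
    (simp add: scaleR_conv_of_real)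

theorem mainTheorem15:
  shows "(\<forall>t::real. schur_mult_norm (Amat + t *\<^sub>R (mat 1 :: cmat4)) =
            (if t \<ge> 1 \<or> t \<le> -3 then \<bar>t\<bar> else \<bar>3 - t\<bar> / 2))
       \<and> schur_mult_norm Amat = 3 / 2
       \<and> schur_mult_norm (mat 1 :: cmat4) = 1
       \<and> schur_mult_norm (Amat - mat 1) = 2
       \<and> schur_mult_norm (Amat - mat 1) >
           sqrt ((schur_mult_norm Amat)\<^sup>2 + (schur_mult_norm (mat 1 :: cmat4))\<^sup>2)"
proof -
  have shifted: "schur_mult_norm (Amat + t *\<^sub>R (mat 1 :: cmat4)) =
      (if t \<ge> 1 \<or> t \<le> -3 then \<bar>t\<bar> else \<bar>3 - t\<bar> / 2)" for t
    unfolding Amat_plus_scaleR_mat_1 schur_mult_norm_diag_offdiag_mat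
    by (auto simp: max_def abs_if field_simps)
  have A: "schur_mult_norm Amat = 3 / 2"
    using shifted[of 0] by simp
  have I: "schur_mult_norm (mat 1 :: cmat4) = 1"
    unfolding mat_1_eq_diag_offdiag_mat schur_mult_norm_diag_offdiag_mat by simp
  have A_minus_I: "schur_mult_norm (Amat - mat 1) = 2"
    using shifted[of "-1"] by simp
  have "sqrt ((3 / 2)\<^sup>2 + 1\<^sup>2) < sqrt (2\<^sup>2)"
    by (rule real_sqrt_less_mono) (simp add: power2_eq_square)
  then show ?thesis
    unfolding A I A_minus_I using shifted by simp
qed

end
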